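(* Let $f:\mathbb{R}^n\to\mathbb{R}^n$ be smooth, $N\ge3$, and for each $i$ let $A_{i+1,i},A_{i-1,i}$ be real $n\times n$ matrices (indices modulo $N$; $A_{j,i}$ is the coupling from node $j$ to node $i$). Consider the bidirectional ring network $$\dot{x}_i=f(x_i)+A_{i+1,i}(x_{i+1}-x_i)+A_{i-1,i}(x_{i-1}-x_i),\qquad i=1,\dots,N.$$ Suppose there is $\lambda>0$ with $(J_f(z))_s\preceq-\lambda I$ for all $z\in\mathbb{R}^n$, and that for each $i=1,\dots,N$ at least one of the following holds: (1) $(A_{i+1,i})_s\succ0$ and $(A_{i,i+1})_s-\tfrac14(A_{i,i+1}+A_{i+1,i}^T)\,(A_{i+1,i})_s^{-1}\,(A_{i+1,i}+A_{i,i+1}^T)\succeq0$; (2) $(A_{i,i+1})_s\succ0$ and $(A_{i+1,i})_s-\tfrac14(A_{i+1,i}+A_{i,i+1}^T)\,(A_{i,i+1})_s^{-1}\,(A_{i,i+1}+A_{i+1,i}^T)\succeq0$. Then for every initial condition, $\|x_i(t)-x_j(t)\|\to0$ exponentially as $t\to\infty$ for all $i,j$ (complete synchronization).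
   Context: $J_f(z)=\frac{\partial f}{\partial z}(z)$ is the Jacobian of $f$. For a square matrix $M$, $M_s=\tfrac12(M+M^T)$ and $M_s^{-1}$ denotes $(M_s)^{-1}$. For symmetric matrices, $\succ0$ ($\succeq0$) means positive definite (semidefinite), and $M\preceq N$ means $N-M\succeq0$. *)

theory Defs
  imports "HOL-Analysis.Analysis"
begin

inductive_set iter_derivs :: "('a::real_normed_vector \<Rightarrow> 'b::real_normed_vector) \<Rightarrow> ('a \<Rightarrow> 'b) set"
  for f where
  base: "f \<in> iter_derivs f"
| step: "g \<in> iter_derivs f \<Longrightarrow> (\<lambda>x. frechet_derivative g (at x) v) \<in> iter_derivs f"

definition smooth :: "('a::real_normed_vector \<Rightarrow> 'b::real_normed_vector) \<Rightarrow> bool" where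
  "smooth f \<longleftrightarrow> (\<forall>g \<in> iter_derivs f. \<forall>x. g differentiable (at x))"

definition jacobian :: "(real^'n \<Rightarrow> real^'n) \<Rightarrow> real^'n \<Rightarrow> real^'n^'n" where
  "jacobian f z = matrix (frechet_derivative f (at z))"

definition sym_part :: "real^'n^'n \<Rightarrow> real^'n^'n" where
  "sym_part M = (1/2) *\<^sub>R (M + transpose M)"

text \<open>Positive semidefinite / definite (used only on symmetric matrices).\<close>
definition psd :: "real^'n^'n \<Rightarrow> bool" where
  "psd M \<longleftrightarrow> (\<forall>v. 0 \<le> v \<bullet> (M *v v))"

definition pd :: "real^'n^'n \<Rightarrow> bool" where
  "pd M \<longleftrightarrow> (\<forall>v. v \<noteq> 0 \<longrightarrow> 0 < v \<bullet> (M *v v))"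

end

theory Submission
  imports Defs
begin

text \<open>Let \<open>e\<^sub>i = x\<^sub>i - m\<close> be the deviations from the network mean \<open>m\<close> and
  \<open>V = \<Sum>\<^sub>i \<bar>e\<^sub>i\<bar>\<^sup>2\<close>. Since \<open>\<Sum>\<^sub>i e\<^sub>i = 0\<close>, the motion of the mean drops out of
  \<open>V' = 2 \<Sum>\<^sub>i e\<^sub>i \<bullet> x\<^sub>i'\<close>, and the drift contributes \<open>\<Sum>\<^sub>i e\<^sub>i \<bullet> (f x\<^sub>i - f m) \<le> -\<lambda> V\<close>
  by the mean value theorem and the Jacobian bound. Regrouping the coupling terms edge by edge,
  the edge between \<open>i\<close> and \<open>i+1\<close> contributes minus a quadratic form in \<open>(e\<^sub>i, e\<^sub>i\<^sub>+\<^sub>1)\<close> whose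
  nonnegativity is exactly the Schur complement condition (1) or (2). Hence \<open>V' \<le> -2\<lambda> V\<close>,
  so \<open>V\<close> decays like \<open>exp (-2\<lambda>t)\<close>, and \<open>\<bar>x\<^sub>i - x\<^sub>j\<bar> \<le> \<bar>e\<^sub>i\<bar> + \<bar>e\<^sub>j\<bar> \<le> 2 \<surd>V\<close>.\<close>

lemma transpose_add: "transpose (A + B) = transpose A + transpose (B :: 'a::semiring_1^'n^'m)"
  by (simp add: transpose_def vec_eq_iff)

lemma uminus_matrix_vector_mult: "(- A) *v x = - (A *v (x :: 'a::ring_1^'n))"
  by (simp add: vec_eq_iff matrix_vector_mult_def sum_negf)

lemma inner_vector_matrix_mult: "u \<bullet> (w v* M) = w \<bullet> (M *v (u :: real^'n))"
  by (metis dot_lmul_matrix inner_commute)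

lemma inner_transpose_matrix_vector: "u \<bullet> (transpose M *v w) = w \<bullet> (M *v (u :: real^'n))"
  by (simp add: inner_vector_matrix_mult)

lemma inner_sym_part_matrix_vector: "v \<bullet> (sym_part M *v v) = v \<bullet> (M *v (v :: real^'n))"
  unfolding sym_part_def
  by (simp add: scaleR_matrix_vector_assoc[symmetric] matrix_vector_mult_add_rdistrib
      inner_add_right inner_vector_matrix_mult)

lemma transpose_sym_part: "transpose (sym_part M) = sym_part (M :: real^'n^'n)"
  unfolding sym_part_def by (simp add: transpose_scalar transpose_add add.commute)

lemma pd_matrix_inv_right:
  fixes P :: "real^'n^'n"
  assumes "pd P"
  shows "P ** matrix_inv P = mat 1"
proof -
  have "\<forall>x. P *v x = 0 \<longrightarrow> x = 0" using assms unfolding pd_def by force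
  then have "invertible P" using matrix_left_invertible_ker invertible_left_inverse by blast
  then show ?thesis unfolding invertible_def matrix_inv_def by (rule someI2_ex) auto
qed

text \<open>The block form \<open>[[P, -K/2], [-K\<^sup>T/2, Q]]\<close> is positive semidefinite when \<open>P\<close> is and
  its Schur complement \<open>Q - K\<^sup>T P\<^sup>-\<^sup>1 K / 4\<close> is: complete the square at \<open>u = P\<^sup>-\<^sup>1 K w / 2\<close>.\<close>

lemma schur_complement_quadratic_nonneg:
  fixes P Q K R :: "real^'n^'n"
  assumes sym: "transpose P = P" and inv: "P ** R = mat 1" and "psd P"
    and schur: "psd (Q - (1/4) *\<^sub>R (transpose K ** R ** K))"
  shows "0 \<le> u \<bullet> (P *v u) - u \<bullet> (K *v w) + w \<bullet> (Q *v w)"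
proof -
  define y where "y = K *v w"
  define r where "r = R *v y"
  have Pr: "P *v r = y"
    unfolding r_def using inv by (metis matrix_vector_mul_assoc matrix_vector_mul_lid)
  have rPu: "r \<bullet> (P *v u) = u \<bullet> y"
    by (metis Pr inner_transpose_matrix_vector sym)
  have "0 \<le> (u - (1/2) *\<^sub>R r) \<bullet> (P *v (u - (1/2) *\<^sub>R r))"
    using \<open>psd P\<close> unfolding psd_def by blast
  also have "\<dots> = u \<bullet> (P *v u) - u \<bullet> y + (1/4) * (y \<bullet> r)"
    by (simp add: matrix_vector_mult_diff_distrib matrix_vector_mult_scaleR Pr inner_diff_left
        inner_diff_right rPu inner_commute[of r y] algebra_simps)
  finally have square: "0 \<le> u \<bullet> (P *v u) - u \<bullet> y + (1/4) * (y \<bullet> r)" .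
  have "0 \<le> w \<bullet> ((Q - (1/4) *\<^sub>R (transpose K ** R ** K)) *v w)"
    using schur unfolding psd_def by blast
  also have "\<dots> = w \<bullet> (Q *v w) - (1/4) * (y \<bullet> r)"
    by (simp add: matrix_vector_mult_diff_rdistrib scaleR_matrix_vector_assoc[symmetric]
        matrix_vector_mul_assoc[symmetric] inner_diff_right inner_vector_matrix_mult
        r_def y_def inner_commute)
  finally show ?thesis using square unfolding y_def by linarith
qed

text \<open>Conditions (1) and (2) of the theorem for the edge between nodes \<open>i\<close> and \<open>i+1\<close>, with
  \<open>A\<^sub>1 = A\<^sub>i\<^sub>+\<^sub>1\<^sub>,\<^sub>i\<close> and \<open>A\<^sub>2 = A\<^sub>i\<^sub>,\<^sub>i\<^sub>+\<^sub>1\<close>.\<close>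

definition coupling_condition :: "real^'n^'n \<Rightarrow> real^'n^'n \<Rightarrow> bool" where
  "coupling_condition A1 A2 \<longleftrightarrow>
     (pd (sym_part A1) \<and>
      psd (sym_part A2 - (1/4) *\<^sub>R ((A2 + transpose A1) ** matrix_inv (sym_part A1) ** (A1 + transpose A2))))
   \<or> (pd (sym_part A2) \<and>
      psd (sym_part A1 - (1/4) *\<^sub>R ((A1 + transpose A2) ** matrix_inv (sym_part A2) ** (A2 + transpose A1))))"

lemma coupling_condition_imp_inner_nonneg:
  assumes "coupling_condition A1 A2"
  shows "0 \<le> u \<bullet> (A1 *v (u - w)) + w \<bullet> (A2 *v (w - u))"
proof -
  have edge_form: "0 \<le> v \<bullet> (B1 *v (v - z)) + z \<bullet> (B2 *v (z - v))"
    if "pd (sym_part B1)"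
      and "psd (sym_part B2 - (1/4) *\<^sub>R ((B2 + transpose B1) ** matrix_inv (sym_part B1)
             ** (B1 + transpose B2)))"
    for B1 B2 :: "real^'n^'n" and v z
  proof -
    have psd_B1: "psd (sym_part B1)"
      using that(1) unfolding pd_def psd_def by (metis inner_zero_left order_le_less)
    have "0 \<le> v \<bullet> (sym_part B1 *v v) - v \<bullet> ((B1 + transpose B2) *v z) + z \<bullet> (sym_part B2 *v z)"
      by (rule schur_complement_quadratic_nonneg[of _ "matrix_inv (sym_part B1)"])
        (use that psd_B1 in \<open>auto simp: transpose_sym_part pd_matrix_inv_right transpose_add
          add.commute\<close>)
    then show ?thesis
      by (simp add: inner_sym_part_matrix_vector matrix_vector_mult_add_rdistrib
          matrix_vector_mult_diff_distrib inner_add_right inner_diff_right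
          inner_vector_matrix_mult)
  qed
  from assms show ?thesis
    unfolding coupling_condition_def
    using edge_form[of A1 A2 u w] edge_form[of A2 A1 w u] by (auto simp: add.commute)
qed

lemma smooth_imp_differentiable: "smooth f \<Longrightarrow> f differentiable (at x)"
  unfolding smooth_def by (blast intro: iter_derivs.base)

lemma contracting_inner_diff_le:
  fixes f :: "real^'n \<Rightarrow> real^'n"
  assumes diff: "\<And>z. f differentiable (at z)"
    and contr: "\<And>z. psd (- (lam *\<^sub>R mat 1) - sym_part (jacobian f z))"
  shows "(a - b) \<bullet> (f a - f b) \<le> - lam * ((a - b) \<bullet> (a - b))"
proof -
  define d where "d = a - b"
  have f_deriv: "(f has_derivative (\<lambda>h. jacobian f z *v h)) (at z)" for z
    using diff[of z] by (simp add: frechet_derivative_works has_derivative_linear jacobian_def)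
  have jacobian_le: "d \<bullet> (jacobian f z *v d) \<le> - lam * (d \<bullet> d)" for z
  proof -
    have "0 \<le> d \<bullet> ((- (lam *\<^sub>R mat 1) - sym_part (jacobian f z)) *v d)"
      using contr unfolding psd_def by blast
    also have "\<dots> = - lam * (d \<bullet> d) - d \<bullet> (jacobian f z *v d)"
      by (simp add: matrix_vector_mult_diff_rdistrib scaleR_matrix_vector_assoc[symmetric]
          inner_diff_right inner_sym_part_matrix_vector uminus_matrix_vector_mult)
    finally show ?thesis by linarith
  qed
  define g where "g s = d \<bullet> f (b + s *\<^sub>R d) + lam * (d \<bullet> d) * s" for s
  have g_deriv: "(g has_derivative (\<lambda>h. d \<bullet> (jacobian f (b + s *\<^sub>R d) *v (h *\<^sub>R d)) + lam * (d \<bullet> d) * h))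
      (at s within {0..1})" for s
    unfolding g_def by (auto intro!: derivative_eq_intros has_derivative_compose[OF _ f_deriv])
  obtain s where "g 1 - g 0 = d \<bullet> (jacobian f (b + s *\<^sub>R d) *v (1 *\<^sub>R d)) + lam * (d \<bullet> d) * 1"
    using mvt_very_simple[of 0 1 g, OF _ g_deriv] by auto
  then have "g 1 \<le> g 0" using jacobian_le[of "b + s *\<^sub>R d"] by simp
  then show ?thesis unfolding g_def d_def by (simp add: inner_diff_right)
qed

definition mean :: "nat \<Rightarrow> (nat \<Rightarrow> 'a::real_vector) \<Rightarrow> 'a" where
  "mean N y = (1 / real N) *\<^sub>R (\<Sum>j<N. y j)"

definition disagreement :: "nat \<Rightarrow> (nat \<Rightarrow> 'a::real_inner) \<Rightarrow> real" where
  "disagreement N y = (\<Sum>i<N. (y i - mean N y) \<bullet> (y i - mean N y))"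

lemma sum_diff_mean: "0 < N \<Longrightarrow> (\<Sum>i<N. y i - mean N y) = 0"
  by (simp add: mean_def sum_subtractf sum_constant_scaleR del: sum_constant)

lemma sum_inner_diff_mean_const: "0 < N \<Longrightarrow> (\<Sum>i<N. (y i - mean N y) \<bullet> c) = 0"
  by (simp add: inner_sum_left[symmetric] sum_diff_mean)

lemma has_derivative_disagreement:
  fixes y :: "real \<Rightarrow> nat \<Rightarrow> 'a::real_inner"
  assumes "0 < N" and deriv: "\<And>i. i < N \<Longrightarrow> ((\<lambda>s. y s i) has_vector_derivative D i) (at t within S)"
  shows "((\<lambda>s. disagreement N (y s)) has_real_derivative
           2 * (\<Sum>i<N. (y t i - mean N (y t)) \<bullet> D i)) (at t within S)"
proof -
  have mean_deriv: "((\<lambda>s. mean N (y s)) has_derivative (\<lambda>h. h *\<^sub>R mean N D)) (at t within S)"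
    unfolding mean_def using deriv
    by (auto intro!: derivative_eq_intros has_derivative_sum
        simp: has_vector_derivative_def scaleR_sum_right)
  have deviation_deriv: "((\<lambda>s. y s i - mean N (y s)) has_derivative
      (\<lambda>h. h *\<^sub>R (D i - mean N D))) (at t within S)" if "i < N" for i
    using deriv[OF that] mean_deriv
    by (auto intro!: derivative_eq_intros simp: has_vector_derivative_def scaleR_diff_right)
  have "((\<lambda>s. (y s i - mean N (y s)) \<bullet> (y s i - mean N (y s))) has_derivative
      (\<lambda>h. h * (2 * ((y t i - mean N (y t)) \<bullet> (D i - mean N D))))) (at t within S)"
    if "i < N" for i
    by (rule has_derivative_eq_rhs[OF has_derivative_inner[OF deviation_deriv deviation_deriv]])
      (auto simp: that fun_eq_iff inner_commute)
  then have "((\<lambda>s. disagreement N (y s)) has_real_derivative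
      (\<Sum>i<N. 2 * ((y t i - mean N (y t)) \<bullet> (D i - mean N D)))) (at t within S)"
    unfolding disagreement_def has_field_derivative_def
    by (rule has_derivative_eq_rhs[OF has_derivative_sum]) (auto simp: fun_eq_iff sum_distrib_left mult.commute)
  moreover have "(\<Sum>i<N. (y t i - mean N (y t)) \<bullet> (D i - mean N D))
      = (\<Sum>i<N. (y t i - mean N (y t)) \<bullet> D i)"
    using sum_inner_diff_mean_const[OF \<open>0 < N\<close>, of "y t" "mean N D"]
    by (simp add: inner_diff_right sum_subtractf)
  ultimately show ?thesis by (simp add: sum_distrib_left[symmetric])
qed

lemma norm_diff_le_disagreement:
  assumes "i < N" "j < N"
  shows "norm (y i - y j) \<le> 2 * sqrt (disagreement N y)"
proof -
  have deviation_le: "norm (y k - mean N y) \<le> sqrt (disagreement N y)" if "k < N" for k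
    using member_le_sum[of k "{..<N}" "\<lambda>i. (y i - mean N y) \<bullet> (y i - mean N y)"] that
    by (simp add: disagreement_def norm_eq_sqrt_inner)
  have "norm (y i - y j) \<le> norm (y i - mean N y) + norm (y j - mean N y)"
    by (metis norm_triangle_ineq4 diff_diff_eq2 diff_add_cancel add_diff_cancel_right')
  then show ?thesis using deviation_le[OF assms(1)] deviation_le[OF assms(2)] by linarith
qed

lemma sum_ring_pred_reindex:
  fixes g :: "nat \<Rightarrow> nat \<Rightarrow> 'a::comm_monoid_add"
  shows "(\<Sum>i<N. g ((i + N - 1) mod N) i) = (\<Sum>j<N. g j ((j + 1) mod N))"
proof (cases "N = 0")
  case False
  have pred_succ: "((j + 1) mod N + N - 1) mod N = j" if "j < N" for j
    using that by (cases "Suc j = N") (auto simp: mod_Suc)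
  have "bij_betw (\<lambda>j. (j + 1) mod N) {..<N} {..<N}"
    by (rule bij_betw_byWitness[where f' = "\<lambda>i. (i + N - 1) mod N"])
      (use False in \<open>auto simp: mod_Suc less_Suc_eq_0_disj mod_if\<close>)
  then have "(\<Sum>i<N. g ((i + N - 1) mod N) i)
      = (\<Sum>j<N. g (((j + 1) mod N + N - 1) mod N) ((j + 1) mod N))"
    by (rule sum.reindex_bij_betw[symmetric])
  also have "\<dots> = (\<Sum>j<N. g j ((j + 1) mod N))"
    using pred_succ by (intro sum.cong) auto
  finally show ?thesis .
qed simp

lemma ring_coupling_inner_nonpos:
  fixes A :: "nat \<Rightarrow> nat \<Rightarrow> real^'n^'n" and e :: "nat \<Rightarrow> real^'n"
  assumes "\<And>i. i < N \<Longrightarrow> coupling_condition (A ((i + 1) mod N) i) (A i ((i + 1) mod N))"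
  shows "(\<Sum>i<N. e i \<bullet> (A ((i + 1) mod N) i *v (e ((i + 1) mod N) - e i)
                     + A ((i + N - 1) mod N) i *v (e ((i + N - 1) mod N) - e i))) \<le> 0"
proof -
  have "(\<Sum>i<N. e i \<bullet> (A ((i + N - 1) mod N) i *v (e ((i + N - 1) mod N) - e i)))
      = (\<Sum>j<N. e ((j + 1) mod N) \<bullet> (A j ((j + 1) mod N) *v (e j - e ((j + 1) mod N))))"
    by (rule sum_ring_pred_reindex[where g = "\<lambda>j i. e i \<bullet> (A j i *v (e j - e i))"])
  \<comment> \<open>after the shift, the two terms belonging to the edge between \<open>j\<close> and \<open>j+1\<close> line up\<close>
  then have "(\<Sum>i<N. e i \<bullet> (A ((i + 1) mod N) i *v (e ((i + 1) mod N) - e i)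
                     + A ((i + N - 1) mod N) i *v (e ((i + N - 1) mod N) - e i)))
      = - (\<Sum>j<N. e j \<bullet> (A ((j + 1) mod N) j *v (e j - e ((j + 1) mod N)))
                 + e ((j + 1) mod N) \<bullet> (A j ((j + 1) mod N) *v (e ((j + 1) mod N) - e j)))"
    by (simp add: inner_add_right sum.distrib matrix_vector_mult_diff_distrib inner_diff_right
        sum_subtractf sum_negf[symmetric] algebra_simps)
  also have "\<dots> \<le> 0"
    unfolding neg_le_0_iff_le by (intro sum_nonneg coupling_condition_imp_inner_nonneg assms) simp
  finally show ?thesis .
qed

lemma ring_network_dissipation:
  fixes f :: "real^'n \<Rightarrow> real^'n" and A :: "nat \<Rightarrow> nat \<Rightarrow> real^'n^'n" and y :: "nat \<Rightarrow> real^'n"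
  assumes "0 < N"
    and diff: "\<And>z. f differentiable (at z)"
    and contr: "\<And>z. psd (- (lam *\<^sub>R mat 1) - sym_part (jacobian f z))"
    and coupling: "\<And>i. i < N \<Longrightarrow> coupling_condition (A ((i + 1) mod N) i) (A i ((i + 1) mod N))"
  shows "(\<Sum>i<N. (y i - mean N y) \<bullet> (f (y i) + A ((i + 1) mod N) i *v (y ((i + 1) mod N) - y i)
                     + A ((i + N - 1) mod N) i *v (y ((i + N - 1) mod N) - y i)))
         \<le> - lam * disagreement N y"
proof -
  define e where "e i = y i - mean N y" for i
  have "(\<Sum>i<N. e i \<bullet> f (y i)) = (\<Sum>i<N. e i \<bullet> (f (y i) - f (mean N y)))"
    using sum_inner_diff_mean_const[OF \<open>0 < N\<close>, of y "f (mean N y)"]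
    by (simp add: e_def inner_diff_right sum_subtractf)
  also have "\<dots> \<le> (\<Sum>i<N. - lam * (e i \<bullet> e i))"
    unfolding e_def by (intro sum_mono contracting_inner_diff_le[OF diff contr])
  finally have drift: "(\<Sum>i<N. e i \<bullet> f (y i)) \<le> - lam * disagreement N y"
    by (simp add: disagreement_def e_def sum_distrib_left)
  have "y k - y l = e k - e l" for k l by (simp add: e_def)
  then show ?thesis
    using drift ring_coupling_inner_nonpos[of N A e, OF coupling]
    by (simp flip: e_def add: inner_add_right sum.distrib add.assoc)
qed

lemma exponential_decay_of_derivative_le:
  fixes V :: "real \<Rightarrow> real"
  assumes deriv: "\<And>t. 0 \<le> t \<Longrightarrow> (V has_real_derivative V' t) (at t within {0..})"
    and decay: "\<And>t. 0 \<le> t \<Longrightarrow> V' t \<le> - c * V t"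
    and "0 \<le> t"
  shows "V t \<le> V 0 * exp (- c * t)"
proof -
  define W where "W s = V s * exp (c * s)" for s
  have W_deriv: "(W has_derivative (\<lambda>h. h * ((V' s + c * V s) * exp (c * s)))) (at s within {0..t})"
    if "0 \<le> s" "s \<le> t" for s
    using has_field_derivative_subset[OF deriv[OF that(1)], of "{0..t}"]
    unfolding W_def has_field_derivative_def
    by (auto intro!: derivative_eq_intros simp: algebra_simps)
  obtain s where s: "0 \<le> s" "W t - W 0 = t * ((V' s + c * V s) * exp (c * s))"
    using mvt_very_simple[OF \<open>0 \<le> t\<close> W_deriv] by auto
  have "t * ((V' s + c * V s) * exp (c * s)) \<le> 0"
    using decay[OF \<open>0 \<le> s\<close>] \<open>0 \<le> t\<close> by (simp add: mult_nonneg_nonpos mult_nonpos_nonneg)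
  then have "V t * exp (c * t) \<le> V 0" using s unfolding W_def by simp
  then show ?thesis by (simp add: exp_minus field_simps)
qed

theorem theorem3p10:
  fixes f :: "real^'n \<Rightarrow> real^'n"
    and N :: nat
    and A :: "nat \<Rightarrow> nat \<Rightarrow> real^'n^'n"
    and lam :: real
    and x :: "real \<Rightarrow> nat \<Rightarrow> real^'n"
  assumes smooth_f: "smooth f"
    and N3: "N \<ge> 3"
    and lam_pos: "lam > 0"
    and contr: "\<And>z. psd (- (lam *\<^sub>R mat 1) - sym_part (jacobian f z))"
    and coupling: "\<And>i. i < N \<Longrightarrow>
       (pd (sym_part (A ((i+1) mod N) i)) \<and>
        psd (sym_part (A i ((i+1) mod N))
             - (1/4) *\<^sub>R ((A i ((i+1) mod N) + transpose (A ((i+1) mod N) i))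
                          ** matrix_inv (sym_part (A ((i+1) mod N) i))
                          ** (A ((i+1) mod N) i + transpose (A i ((i+1) mod N))))))
     \<or> (pd (sym_part (A i ((i+1) mod N))) \<and>
        psd (sym_part (A ((i+1) mod N) i)
             - (1/4) *\<^sub>R ((A ((i+1) mod N) i + transpose (A i ((i+1) mod N)))
                          ** matrix_inv (sym_part (A i ((i+1) mod N)))
                          ** (A i ((i+1) mod N) + transpose (A ((i+1) mod N) i)))))"
    and solution: "\<And>t i. t \<ge> 0 \<Longrightarrow> i < N \<Longrightarrow>
       ((\<lambda>s. x s i) has_vector_derivative
          (f (x t i) + A ((i+1) mod N) i *v (x t ((i+1) mod N) - x t i)
                     + A ((i+N-1) mod N) i *v (x t ((i+N-1) mod N) - x t i)))
       (at t within {0..})"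
  shows "\<exists>C c. c > 0 \<and> (\<forall>t\<ge>0. \<forall>i<N. \<forall>j<N. norm (x t i - x t j) \<le> C * exp (- c * t))"
proof -
  have "0 < N" using N3 by simp
  have edges: "coupling_condition (A ((i + 1) mod N) i) (A i ((i + 1) mod N))" if "i < N" for i
    using coupling[OF that] unfolding coupling_condition_def .
  define F where "F t i = f (x t i) + A ((i+1) mod N) i *v (x t ((i+1) mod N) - x t i)
                   + A ((i+N-1) mod N) i *v (x t ((i+N-1) mod N) - x t i)" for t i
  define V where "V t = disagreement N (x t)" for t
  have decay: "V t \<le> V 0 * exp (- (2 * lam) * t)" if "0 \<le> t" for t
  proof (rule exponential_decay_of_derivative_le[OF _ _ that])
    fix s :: real assume "0 \<le> s"
    show "(V has_real_derivative 2 * (\<Sum>i<N. (x s i - mean N (x s)) \<bullet> F s i)) (at s within {0..})"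
      unfolding V_def using \<open>0 < N\<close> solution[OF \<open>0 \<le> s\<close>, folded F_def]
      by (rule has_derivative_disagreement[where D = "F s"])
    show "2 * (\<Sum>i<N. (x s i - mean N (x s)) \<bullet> F s i) \<le> - (2 * lam) * V s"
      using ring_network_dissipation[where A = A and y = "x s",
          OF \<open>0 < N\<close> smooth_imp_differentiable[OF smooth_f] contr edges]
      unfolding V_def F_def by simp
  qed
  have "norm (x t i - x t j) \<le> 2 * sqrt (V 0) * exp (- lam * t)"
    if "0 \<le> t" "i < N" "j < N" for t i j
  proof -
    have "norm (x t i - x t j) \<le> 2 * sqrt (V t)"
      unfolding V_def by (rule norm_diff_le_disagreement[OF that(2,3)])
    also have "\<dots> \<le> 2 * sqrt (V 0 * exp (- lam * t) ^ 2)"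
      using decay[OF that(1)] by (simp flip: exp_add add: power2_eq_square mult.assoc)
    also have "\<dots> = 2 * sqrt (V 0) * exp (- lam * t)"
      by (simp add: real_sqrt_mult)
    finally show ?thesis .
  qed
  then show ?thesis using lam_pos by blast
qed

end
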